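(* For every $\alpha>0$ there exists $\ell_0$ such that for every integer $\ell\ge\ell_0$ and every digraph $D$ on $n$ vertices the following holds. There exist vertices $v_1, \dots, v_t \in V(D)$ and sets $V_1, \dots, V_t \subseteq V(D)$ such that (a) for every $j$ and every $u \in V_j$ there is a directed path from $u$ to $v_j$ of length at most $\ell$, (b) the sets $V_1, \dots, V_t$ partition $V(D)$, and (c) $|V_j| \geq \delta^+(D) - \alpha n$ for each $j$.
   Context: A digraph $D$ has a vertex set and a set of ordered pairs of vertices (edges), loops allowed, no multiple copies of an ordered pair. The outdegree of $v$ is the number of $w$ with $(v,w)\in E(D)$, and $\delta^+(D)$ is the minimum outdegree over all vertices. *)

theory Defs
  imports Complex_Main
begin

definition digraph :: "'a set \<Rightarrow> ('a \<times> 'a) set \<Rightarrow> bool" where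
  "digraph V E \<longleftrightarrow> finite V \<and> E \<subseteq> V \<times> V"

definition outdeg :: "('a \<times> 'a) set \<Rightarrow> 'a \<Rightarrow> nat" where
  "outdeg E v = card {w. (v, w) \<in> E}"

text \<open>Minimum outdegree (meaningful for nonempty V).\<close>
definition min_outdeg :: "'a set \<Rightarrow> ('a \<times> 'a) set \<Rightarrow> nat" where
  "min_outdeg V E = Min (outdeg E ` V)"

definition has_dpath_le :: "'a set \<Rightarrow> ('a \<times> 'a) set \<Rightarrow> nat \<Rightarrow> 'a \<Rightarrow> 'a \<Rightarrow> bool" where
  "has_dpath_le V E l u v \<longleftrightarrow>
     (\<exists>ps. ps \<noteq> [] \<and> distinct ps \<and> set ps \<subseteq> V \<and> hd ps = u \<and> last ps = v \<and>
          (\<forall>i. Suc i < length ps \<longrightarrow> (ps ! i, ps ! Suc i) \<in> E) \<and>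
          length ps - 1 \<le> l)"

end

theory Submission
  imports Defs
begin

text \<open>Let \<open>d\<close> be the minimum outdegree and \<open>\<theta> = d - \<alpha>n\<close>. Take a largest set \<open>A\<close> of
  vertices together with a choice of an out-neighbour \<open>g a\<close> for each \<open>a \<in> A\<close> such that
  every chosen vertex is chosen at least \<open>\<theta>\<close> times; by maximality every vertex has fewer
  than \<open>\<theta>\<close> in-neighbours outside \<open>A\<close>. Let \<open>S k\<close> be the set of vertices that cannot reach
  \<open>A\<close> within \<open>k\<close> steps. All out-neighbours of \<open>S (k+1)\<close> lie in \<open>S k\<close>, so double counting
  the edges between them gives \<open>d |S (k+1)| \<le> \<theta> |S k|\<close>; since \<open>|S k| \<ge> d\<close> whenever
  \<open>S (k+1) \<noteq> {}\<close>, the sets shrink by at least \<open>\<alpha>n\<close> per step and \<open>S K = {}\<close> once \<open>K\<alpha> > 1\<close>.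
  Mapping each vertex \<open>u\<close> to \<open>g a\<close> for some \<open>a \<in> A\<close> reachable from \<open>u\<close> within \<open>K\<close> steps,
  the fibres of the map form the required partition.\<close>

inductive reach_within :: "'a set \<Rightarrow> ('a \<times> 'a) set \<Rightarrow> nat \<Rightarrow> 'a \<Rightarrow> 'a \<Rightarrow> bool"
  for V E where
  base: "u \<in> V \<Longrightarrow> reach_within V E k u u"
| step: "(u, x) \<in> E \<Longrightarrow> u \<in> V \<Longrightarrow> reach_within V E k x v \<Longrightarrow> reach_within V E (Suc k) u v"

lemma reach_within_snoc:
  assumes "reach_within V E k u v" "(v, w) \<in> E" "w \<in> V"
  shows "reach_within V E (Suc k) u w"
  using assms by (induction rule: reach_within.induct) (auto intro: reach_within.intros)

lemma has_dpath_le_mono: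
  "has_dpath_le V E k u v \<Longrightarrow> k \<le> l \<Longrightarrow> has_dpath_le V E l u v"
  unfolding has_dpath_le_def using le_trans by blast

text \<open>Prepending \<open>u\<close> to a path that already visits \<open>u\<close> would break distinctness; then the
  suffix starting at \<open>u\<close> is used instead.\<close>
lemma has_dpath_le_Cons:
  assumes edge: "(u, x) \<in> E" and "u \<in> V" and "has_dpath_le V E k x v"
  shows "has_dpath_le V E (Suc k) u v"
proof -
  from \<open>has_dpath_le V E k x v\<close> obtain ps where
    ps: "ps \<noteq> []" "distinct ps" "set ps \<subseteq> V" "hd ps = x" "last ps = v"
      "\<forall>i. Suc i < length ps \<longrightarrow> (ps ! i, ps ! Suc i) \<in> E" "length ps - 1 \<le> k"
    unfolding has_dpath_le_def by blast
  show ?thesis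
  proof (cases "u \<in> set ps")
    case True
    then obtain i where i: "i < length ps" "ps ! i = u" by (auto simp: in_set_conv_nth)
    let ?qs = "drop i ps"
    have "\<forall>j. Suc j < length ?qs \<longrightarrow> (?qs ! j, ?qs ! Suc j) \<in> E"
      using ps(6) by (simp add: add.commute)
    moreover have "set ?qs \<subseteq> V" using set_drop_subset[of i ps] ps(3) by blast
    ultimately show ?thesis
      unfolding has_dpath_le_def using i ps
      by (intro exI[of _ ?qs]) (auto simp: hd_drop_conv_nth)
  next
    case False
    let ?qs = "u # ps"
    have "\<forall>j. Suc j < length ?qs \<longrightarrow> (?qs ! j, ?qs ! Suc j) \<in> E"
    proof (intro allI impI)
      fix j assume "Suc j < length ?qs"
      then show "(?qs ! j, ?qs ! Suc j) \<in> E"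
        using ps(1,4,6) edge by (cases j) (auto simp: hd_conv_nth)
    qed
    then show ?thesis
      unfolding has_dpath_le_def using False ps \<open>u \<in> V\<close>
      by (intro exI[of _ ?qs]) (auto simp: last_ConsR)
  qed
qed

lemma reach_within_imp_has_dpath_le:
  "reach_within V E k u v \<Longrightarrow> has_dpath_le V E k u v"
proof (induction rule: reach_within.induct)
  case (base u k)
  then show ?case unfolding has_dpath_le_def by (intro exI[of _ "[u]"]) auto
next
  case (step u x k v)
  from step.hyps(1,2) step.IH show ?case by (rule has_dpath_le_Cons)
qed

lemma fibre_partition:
  fixes \<theta> :: real and R :: "'a \<Rightarrow> 'a \<Rightarrow> bool"
  assumes "finite V"
    and f: "\<And>u. u \<in> V \<Longrightarrow> f u \<in> V \<and> R u (f u)"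
    and fibres: "\<And>w. w \<in> f ` V \<Longrightarrow> \<theta> \<le> real (card {u\<in>V. f u = w})"
  shows "\<exists>(t::nat) (v::nat \<Rightarrow> 'a) (Vs::nat \<Rightarrow> 'a set).
           (\<forall>j<t. v j \<in> V) \<and>
           (\<forall>j<t. \<forall>u\<in>Vs j. R u (v j)) \<and>
           (\<forall>j<t. Vs j \<noteq> {} \<and> Vs j \<subseteq> V) \<and>
           (\<forall>i<t. \<forall>j<t. i \<noteq> j \<longrightarrow> Vs i \<inter> Vs j = {}) \<and>
           (\<Union>j<t. Vs j) = V \<and>
           (\<forall>j<t. \<theta> \<le> real (card (Vs j)))"
proof -
  obtain h where "bij_betw h {0..<card (f ` V)} (f ` V)"
    using ex_bij_betw_nat_finite \<open>finite V\<close> by blast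
  then have image: "h ` {..<card (f ` V)} = f ` V" and inj: "inj_on h {..<card (f ` V)}"
    by (auto simp: bij_betw_def atLeast0LessThan)
  define Vs where "Vs j = {u\<in>V. f u = h j}" for j
  have h_in: "h j \<in> f ` V" if "j < card (f ` V)" for j
    using image that by blast
  have "(\<Union>j<card (f ` V). Vs j) = V"
  proof
    show "V \<subseteq> (\<Union>j<card (f ` V). Vs j)"
    proof
      fix u assume "u \<in> V"
      then obtain j where "j < card (f ` V)" "h j = f u"
        using image by (metis imageE imageI lessThan_iff)
      with \<open>u \<in> V\<close> have "u \<in> Vs j" by (simp add: Vs_def)
      with \<open>j < card (f ` V)\<close> show "u \<in> (\<Union>j<card (f ` V). Vs j)" by blast
    qed
  qed (auto simp: Vs_def)
  moreover have "Vs i \<inter> Vs j = {}" if "i < card (f ` V)" "j < card (f ` V)" "i \<noteq> j" for i j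
    using inj that by (auto simp: Vs_def inj_on_def)
  moreover have "Vs j \<noteq> {}" if "j < card (f ` V)" for j
    using h_in[OF that] by (auto simp: Vs_def)
  moreover have "\<theta> \<le> real (card (Vs j))" if "j < card (f ` V)" for j
    using fibres[OF h_in[OF that]] by (simp add: Vs_def)
  moreover have "h j \<in> V" if "j < card (f ` V)" for j
    using h_in[OF that] f by (auto simp: image_iff)
  moreover have "R u (h j)" if "u \<in> Vs j" for u j
    using f[of u] that by (auto simp: Vs_def)
  ultimately show ?thesis
    by (intro exI[of _ "card (f ` V)"] exI[of _ h] exI[of _ Vs]) (auto simp: Vs_def[symmetric])
qed

definition in_nbrs :: "('a \<times> 'a) set \<Rightarrow> 'a \<Rightarrow> 'a set" where
  "in_nbrs E w = {u. (u, w) \<in> E}"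

lemma finite_in_nbrs:
  assumes "digraph V E" shows "finite (in_nbrs E w)"
proof (rule finite_subset)
  show "in_nbrs E w \<subseteq> V" using assms by (auto simp: digraph_def in_nbrs_def)
qed (use assms in \<open>simp add: digraph_def\<close>)

definition heavy_selection ::
    "'a set \<Rightarrow> ('a \<times> 'a) set \<Rightarrow> real \<Rightarrow> 'a set \<Rightarrow> ('a \<Rightarrow> 'a) \<Rightarrow> bool" where
  "heavy_selection V E \<theta> A g \<longleftrightarrow>
     A \<subseteq> V \<and> (\<forall>a\<in>A. (a, g a) \<in> E) \<and> (\<forall>w\<in>g ` A. \<theta> \<le> real (card {a\<in>A. g a = w}))"

lemma heavy_selection_finite:
  "heavy_selection V E \<theta> A g \<Longrightarrow> digraph V E \<Longrightarrow> finite A"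
  unfolding heavy_selection_def digraph_def by (metis finite_subset)

lemma heavy_selection_extend:
  assumes sel: "heavy_selection V E \<theta> A g" and dg: "digraph V E"
    and big: "\<theta> \<le> real (card (in_nbrs E w - A))"
  shows "heavy_selection V E \<theta> (A \<union> in_nbrs E w) (\<lambda>x. if x \<in> A then g x else w)"
    (is "heavy_selection V E \<theta> ?B ?h")
proof -
  have "finite ?B"
    using heavy_selection_finite[OF sel dg] finite_in_nbrs[OF dg] by simp
  have "\<theta> \<le> real (card {b\<in>?B. ?h b = y})" if "y \<in> ?h ` ?B" for y
  proof (cases "y \<in> g ` A")
    case True
    have "{a\<in>A. g a = y} \<subseteq> {b\<in>?B. ?h b = y}" by auto
    then have "card {a\<in>A. g a = y} \<le> card {b\<in>?B. ?h b = y}"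
      using \<open>finite ?B\<close> by (intro card_mono) auto
    moreover have "\<theta> \<le> real (card {a\<in>A. g a = y})"
      using sel True unfolding heavy_selection_def by blast
    ultimately show ?thesis by linarith
  next
    case False
    with that have "y = w" by auto
    then have "in_nbrs E w - A \<subseteq> {b\<in>?B. ?h b = y}" by auto
    then have "card (in_nbrs E w - A) \<le> card {b\<in>?B. ?h b = y}"
      using \<open>finite ?B\<close> by (intro card_mono) auto
    then show ?thesis using big by linarith
  qed
  then show ?thesis
    using sel dg unfolding heavy_selection_def digraph_def in_nbrs_def by auto
qed

lemma ex_saturated_heavy_selection:
  assumes dg: "digraph V E" and "\<theta> > 0"
  obtains A g where "heavy_selection V E \<theta> A g"
    and "\<And>w. real (card (in_nbrs E w - A)) < \<theta>"
proof -
  have "finite V" using dg by (simp add: digraph_def)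
  have "\<exists>A. (\<exists>g. heavy_selection V E \<theta> A g) \<and>
            (\<forall>B. (\<exists>h. heavy_selection V E \<theta> B h) \<longrightarrow> card B \<le> card A)"
    using \<open>finite V\<close>
    by (intro ex_has_greatest_nat[where k = "{}" and b = "Suc (card V)"])
       (auto simp: heavy_selection_def intro: card_mono le_imp_less_Suc)
  then obtain A g where sel: "heavy_selection V E \<theta> A g"
    and max: "\<And>B h. heavy_selection V E \<theta> B h \<Longrightarrow> card B \<le> card A"
    by blast
  have "real (card (in_nbrs E w - A)) < \<theta>" for w
  proof (rule ccontr)
    assume "\<not> real (card (in_nbrs E w - A)) < \<theta>"
    then have big: "\<theta> \<le> real (card (in_nbrs E w - A))" by simp
    with \<open>\<theta> > 0\<close> have "in_nbrs E w - A \<noteq> {}" by (metis card.empty not_le of_nat_0)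
    moreover have "finite (A \<union> in_nbrs E w)"
      using heavy_selection_finite[OF sel dg] finite_in_nbrs[OF dg] by simp
    ultimately have "card A < card (A \<union> in_nbrs E w)"
      by (intro psubset_card_mono) auto
    moreover have "card (A \<union> in_nbrs E w) \<le> card A"
      using max[OF heavy_selection_extend[OF sel dg big]] .
    ultimately show False by simp
  qed
  with sel show ?thesis by (rule that)
qed

lemma sum_card_filter_swap:
  assumes "finite X" "finite Y"
  shows "(\<Sum>x\<in>X. card {y\<in>Y. P x y}) = (\<Sum>y\<in>Y. card {x\<in>X. P x y})"
  using assms by (simp add: card_eq_sum sum.inter_filter sum.swap[of _ X Y] del: sum_constant)

lemma double_counting_degrees:
  fixes c :: real
  assumes "finite X" "finite Y"
    and into: "\<And>x y. x \<in> X \<Longrightarrow> (x, y) \<in> E \<Longrightarrow> y \<in> Y"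
    and out: "\<And>x. x \<in> X \<Longrightarrow> d \<le> outdeg E x"
    and inn: "\<And>y. y \<in> Y \<Longrightarrow> real (card {x\<in>X. (x, y) \<in> E}) \<le> c"
  shows "real d * real (card X) \<le> c * real (card Y)"
proof -
  have "d * card X \<le> (\<Sum>x\<in>X. outdeg E x)"
    using sum_bounded_below[of X d "outdeg E"] out by (simp add: mult.commute)
  also have "\<dots> = (\<Sum>x\<in>X. card {y\<in>Y. (x, y) \<in> E})"
  proof (rule sum.cong[OF refl])
    fix x assume "x \<in> X"
    then have "{y. (x, y) \<in> E} = {y\<in>Y. (x, y) \<in> E}" using into by blast
    then show "outdeg E x = card {y\<in>Y. (x, y) \<in> E}" by (simp add: outdeg_def)
  qed
  also have "\<dots> = (\<Sum>y\<in>Y. card {x\<in>X. (x, y) \<in> E})"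
    using assms(1,2) by (rule sum_card_filter_swap)
  finally have "real (d * card X) \<le> real (\<Sum>y\<in>Y. card {x\<in>X. (x, y) \<in> E})"
    by (rule of_nat_mono)
  also have "\<dots> = (\<Sum>y\<in>Y. real (card {x\<in>X. (x, y) \<in> E}))" by simp
  also have "\<dots> \<le> (\<Sum>y\<in>Y. c)" using inn by (rule sum_mono)
  finally show ?thesis by (simp add: mult.commute)
qed

definition unreached :: "'a set \<Rightarrow> ('a \<times> 'a) set \<Rightarrow> 'a set \<Rightarrow> nat \<Rightarrow> 'a set" where
  "unreached V E A k = {u\<in>V. \<not> (\<exists>a\<in>A. reach_within V E k u a)}"

lemma unreached_out_nbr:
  assumes "digraph V E" "u \<in> unreached V E A (Suc k)" "(u, x) \<in> E"
  shows "x \<in> unreached V E A k"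
  using assms by (auto simp: unreached_def digraph_def intro: reach_within.step)

lemma unreached_disjoint: "unreached V E A k \<inter> A = {}"
  by (auto simp: unreached_def intro: reach_within.base)

lemma unreached_shrinks:
  fixes c :: real
  assumes dg: "digraph V E" and "c \<ge> 0"
    and out: "\<And>u. u \<in> V \<Longrightarrow> d \<le> outdeg E u"
    and sparse_in: "\<And>w. real (card (in_nbrs E w - A)) < real d - c"
    and ne: "unreached V E A (Suc k) \<noteq> {}"
  shows "real (card (unreached V E A (Suc k))) + c \<le> real (card (unreached V E A k))"
proof -
  let ?X = "unreached V E A (Suc k)" and ?Y = "unreached V E A k"
  have fin: "finite ?X" "finite ?Y"
    using dg by (auto simp: unreached_def digraph_def)
  have out_X: "d \<le> outdeg E x" if "x \<in> ?X" for x
    using out that by (simp add: unreached_def)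
  have in_X: "real (card {x\<in>?X. (x, y) \<in> E}) \<le> real d - c" for y
  proof -
    have "{x\<in>?X. (x, y) \<in> E} \<subseteq> in_nbrs E y - A"
      using unreached_disjoint[of V E A "Suc k"] by (auto simp: in_nbrs_def)
    then have "card {x\<in>?X. (x, y) \<in> E} \<le> card (in_nbrs E y - A)"
      using finite_in_nbrs[OF dg] by (intro card_mono) auto
    with sparse_in[of y] show ?thesis by linarith
  qed
  have count: "real d * real (card ?X) \<le> (real d - c) * real (card ?Y)"
    using fin unreached_out_nbr[OF dg] out_X in_X by (rule double_counting_degrees)
  from ne obtain u where u: "u \<in> ?X" by blast
  have "outdeg E u \<le> card ?Y"
    unfolding outdeg_def using fin unreached_out_nbr[OF dg u] by (intro card_mono) auto
  with out_X[OF u] have d_Y: "real d \<le> real (card ?Y)" by simp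
  have "real d > 0" using sparse_in[of u] \<open>c \<ge> 0\<close> by linarith
  have "c * real d \<le> c * real (card ?Y)" using d_Y \<open>c \<ge> 0\<close> by (rule mult_left_mono)
  with count have "real d * real (card ?X) \<le> real d * (real (card ?Y) - c)"
    by (simp add: algebra_simps)
  with \<open>real d > 0\<close> show ?thesis by simp
qed

lemma shrinking_sets_vanish:
  fixes S :: "nat \<Rightarrow> 'a set" and c :: real
  assumes shrink: "\<And>k. S (Suc k) \<noteq> {} \<Longrightarrow> real (card (S (Suc k))) + c \<le> real (card (S k))"
    and small: "real (card (S 0)) < real K * c"
  shows "S K = {}"
proof -
  have "c > 0" using small by (smt (verit) mult_nonneg_nonpos of_nat_0_le_iff)
  have "S k \<noteq> {} \<Longrightarrow> real (card (S k)) + real k * c \<le> real (card (S 0))" for k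
  proof (induction k)
    case (Suc k)
    with shrink[of k] \<open>c > 0\<close> have "card (S k) \<noteq> 0" by linarith
    then show ?case using Suc shrink[of k] by (force simp: algebra_simps)
  qed simp
  then show ?thesis using small \<open>c > 0\<close> by (smt (verit) of_nat_0_le_iff)
qed

lemma ex_map_with_heavy_fibres:
  fixes \<alpha> :: real
  assumes dg: "digraph V E" and K: "1 < real K * \<alpha>"
  obtains f where "\<And>u. u \<in> V \<Longrightarrow> f u \<in> V \<and> reach_within V E (Suc K) u (f u)"
    and "\<And>w. w \<in> f ` V \<Longrightarrow>
           real (min_outdeg V E) - \<alpha> * real (card V) \<le> real (card {u\<in>V. f u = w})"
proof (cases "V \<noteq> {} \<and> real (min_outdeg V E) - \<alpha> * real (card V) > 0")
  case False
  show ?thesis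
  proof (rule that[of id])
    fix w assume "w \<in> id ` V"
    with False show "real (min_outdeg V E) - \<alpha> * real (card V) \<le> real (card {u\<in>V. id u = w})"
      by auto
  qed (simp add: reach_within.base)
next
  case True
  let ?d = "min_outdeg V E" and ?n = "card V"
  let ?\<theta> = "real ?d - \<alpha> * real ?n"
  have "finite V" "E \<subseteq> V \<times> V" using dg by (auto simp: digraph_def)
  have "?n > 0" using True \<open>finite V\<close> by (simp add: card_gt_0_iff)
  have "\<alpha> > 0"
  proof (rule ccontr)
    assume "\<not> \<alpha> > 0"
    then have "real K * \<alpha> \<le> 0" by (simp add: mult_nonneg_nonpos)
    with K show False by linarith
  qed
  have out: "?d \<le> outdeg E u" if "u \<in> V" for u
    unfolding min_outdeg_def using \<open>finite V\<close> that by simp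
  have "?\<theta> > 0" using True by simp
  with dg obtain A g where sel: "heavy_selection V E ?\<theta> A g"
    and sparse_in: "\<And>w. real (card (in_nbrs E w - A)) < ?\<theta>"
    by (rule ex_saturated_heavy_selection) blast
  have "unreached V E A K = {}"
  proof (rule shrinking_sets_vanish[where c = "\<alpha> * real ?n"])
    show "real (card (unreached V E A (Suc k))) + \<alpha> * real ?n \<le> real (card (unreached V E A k))"
      if "unreached V E A (Suc k) \<noteq> {}" for k
      using unreached_shrinks[OF dg _ out sparse_in that] \<open>\<alpha> > 0\<close> by simp
    have "card (unreached V E A 0) \<le> ?n"
      using \<open>finite V\<close> by (intro card_mono) (auto simp: unreached_def)
    moreover have "1 * real ?n < (real K * \<alpha>) * real ?n"
      using K \<open>?n > 0\<close> by (intro mult_strict_right_mono) auto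
    ultimately show "real (card (unreached V E A 0)) < real K * (\<alpha> * real ?n)"
      by (simp add: mult.assoc)
  qed
  then have reaches: "\<exists>a. a \<in> A \<and> reach_within V E K u a" if "u \<in> V" for u
    using that by (auto simp: unreached_def)
  define f where
    "f u = g (if u \<in> A then u else SOME a. a \<in> A \<and> reach_within V E K u a)" for u
  have via: "\<exists>a\<in>A. f u = g a \<and> reach_within V E K u a" if "u \<in> V" for u
  proof (cases "u \<in> A")
    case True
    with that show ?thesis by (auto simp: f_def intro: reach_within.base)
  next
    case False
    with someI_ex[OF reaches[OF that]] show ?thesis by (auto simp: f_def)
  qed
  have edge: "(a, g a) \<in> E" if "a \<in> A" for a
    using sel that by (simp add: heavy_selection_def)
  show ?thesis
  proof (rule that)
    fix u assume "u \<in> V"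
    with via obtain a where "a \<in> A" "f u = g a" "reach_within V E K u a" by blast
    moreover have "g a \<in> V" using edge[OF \<open>a \<in> A\<close>] \<open>E \<subseteq> V \<times> V\<close> by blast
    ultimately show "f u \<in> V \<and> reach_within V E (Suc K) u (f u)"
      using edge by (simp add: reach_within_snoc)
  next
    fix w assume "w \<in> f ` V"
    with via have "w \<in> g ` A" by blast
    then have "?\<theta> \<le> real (card {a\<in>A. g a = w})"
      using sel unfolding heavy_selection_def by blast
    moreover have "{a\<in>A. g a = w} \<subseteq> {u\<in>V. f u = w}"
      using sel by (auto simp: f_def heavy_selection_def)
    then have "card {a\<in>A. g a = w} \<le> card {u\<in>V. f u = w}"
      using \<open>finite V\<close> by (intro card_mono) auto
    ultimately show "?\<theta> \<le> real (card {u\<in>V. f u = w})" by linarith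
  qed
qed

lemma short_path_partition:
  fixes \<alpha> :: real
  assumes dg: "digraph V E" and K: "1 < real K * \<alpha>" and "Suc K \<le> l"
  shows "\<exists>(t::nat) (v::nat \<Rightarrow> 'a) (Vs::nat \<Rightarrow> 'a set).
           (\<forall>j<t. v j \<in> V) \<and>
           (\<forall>j<t. \<forall>u\<in>Vs j. has_dpath_le V E l u (v j)) \<and>
           (\<forall>j<t. Vs j \<noteq> {} \<and> Vs j \<subseteq> V) \<and>
           (\<forall>i<t. \<forall>j<t. i \<noteq> j \<longrightarrow> Vs i \<inter> Vs j = {}) \<and>
           (\<Union>j<t. Vs j) = V \<and>
           (\<forall>j<t. real (card (Vs j)) \<ge> real (min_outdeg V E) - \<alpha> * real (card V))"
proof -
  obtain f where f: "\<And>u. u \<in> V \<Longrightarrow> f u \<in> V \<and> reach_within V E (Suc K) u (f u)"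
    and fibres: "\<And>w. w \<in> f ` V \<Longrightarrow>
           real (min_outdeg V E) - \<alpha> * real (card V) \<le> real (card {u\<in>V. f u = w})"
    using ex_map_with_heavy_fibres[OF dg K] by blast
  have path: "f u \<in> V \<and> has_dpath_le V E l u (f u)" if "u \<in> V" for u
    using f[OF that] \<open>Suc K \<le> l\<close>
    by (blast intro: has_dpath_le_mono reach_within_imp_has_dpath_le)
  have "finite V" using dg by (simp add: digraph_def)
  then show ?thesis
    using path fibres by (rule fibre_partition[where R = "has_dpath_le V E l"])
qed

theorem lemma4p2:
  fixes \<alpha> :: real
  assumes "\<alpha> > 0"
  shows "\<exists>l0::nat. \<forall>l\<ge>l0. \<forall>(V::nat set) E. digraph V E \<longrightarrow>
           (\<exists>(t::nat) (v::nat \<Rightarrow> nat) (Vs::nat \<Rightarrow> nat set).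
              (\<forall>j<t. v j \<in> V) \<and>
              (\<forall>j<t. \<forall>u\<in>Vs j. has_dpath_le V E l u (v j)) \<and>
              (\<forall>j<t. Vs j \<noteq> {} \<and> Vs j \<subseteq> V) \<and>
              (\<forall>i<t. \<forall>j<t. i \<noteq> j \<longrightarrow> Vs i \<inter> Vs j = {}) \<and>
              (\<Union>j<t. Vs j) = V \<and>
              (\<forall>j<t. real (card (Vs j)) \<ge> real (min_outdeg V E) - \<alpha> * real (card V)))"
proof -
  obtain K :: nat where "1 < real K * \<alpha>"
    using ex_less_of_nat_mult[OF assms] by blast
  then show ?thesis
    by (intro exI[of _ "Suc K"] allI impI short_path_partition)
qed

end
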